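(* Let $P\in\mathbb{R}^{p\times m}$, $Y_d\in\mathbb{R}^p$, plant $Y_k=PU_k+N_k$, $E_k=Y_d-Y_k$, $\bar U_k=-\Delta U_k$, $D_k=-\Delta N_k$ (so $E_{k+1}=E_k+P\bar U_k+D_k$), $\bar B=\begin{bmatrix}P\\0\end{bmatrix}$, $\bar L\in\mathbb{R}^{2p\times p}$, and consider the ESO $\hat{\bar X}_{k+1}=(\bar A-\bar L\bar C)\hat{\bar X}_k+\bar B\bar U_k+\bar LE_k$ with $\hat{\bar X}_k=\begin{bmatrix}\hat E_k\\\hat D_k\end{bmatrix}$, $\hat E_k,\hat D_k\in\mathbb{R}^p$. Let $K,H\in\mathbb{R}^{m\times p}$, $\bar K=\begin{bmatrix}K&H\end{bmatrix}$, and apply $\bar U_k=-\bar K\hat{\bar X}_k=-K\hat E_k-H\hat D_k$. Then $\begin{bmatrix}E_{k+1}\\\hat{\bar X}_{k+1}\end{bmatrix}=G\begin{bmatrix}E_{k}\\\hat{\bar X}_{k}\end{bmatrix}+\begin{bmatrix}I\\0\end{bmatrix}D_k$ with $G=\begin{bmatrix}I&-P\bar K\\\bar L&\bar A-\bar L\bar C-\bar B\bar K\end{bmatrix}$, and with the nonsingular $T=\begin{bmatrix}I&0\\-\bar C^{\top}&I\end{bmatrix}$ one has $TGT^{-1}=\begin{bmatrix}I-PK&-P\bar K\\0&\bar A-\bar L\bar C\end{bmatrix}$. Consequently the eigenvalues of $G$ are those of $I-PK$ together with those of $\bar A-\bar L\bar C$ (separation principle), so the feedback gain $K$ and the observer gain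 $\bar L$ can be designed separately, $K$ in the same way as for the pure state feedback $\bar U_k=-KE_k$.
   Context: $\mathbb{Z}_+=\{0,1,2,\dots\}$; $\Delta f_k=f_{k+1}-f_k$. $U_k\in\mathbb{R}^m$ input, $Y_k\in\mathbb{R}^p$ output, $(N_k)\subset\mathbb{R}^p$ a bounded uncertainty sequence. $\bar A=\begin{bmatrix}I_p&I_p\\0&I_p\end{bmatrix}$, $\bar C=\begin{bmatrix}I_p&0\end{bmatrix}$. *)

theory Defs
  imports "Jordan_Normal_Form.Matrix" "Jordan_Normal_Form.Char_Poly"
begin

definition Abar :: "nat \<Rightarrow> real mat" where
  "Abar p = four_block_mat (1\<^sub>m p) (1\<^sub>m p) (0\<^sub>m p p) (1\<^sub>m p)"

definition Cbar :: "nat \<Rightarrow> real mat" where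
  "Cbar p = four_block_mat (1\<^sub>m p) (0\<^sub>m p p) (0\<^sub>m 0 p) (0\<^sub>m 0 p)"

definition Bbar :: "real mat \<Rightarrow> real mat" where
  "Bbar P = P @\<^sub>r 0\<^sub>m (dim_row P) (dim_col P)"

definition Kbar :: "real mat \<Rightarrow> real mat \<Rightarrow> real mat" where
  "Kbar K H = four_block_mat K H (0\<^sub>m 0 (dim_col K)) (0\<^sub>m 0 (dim_col H))"

definition Gmat :: "nat \<Rightarrow> real mat \<Rightarrow> real mat \<Rightarrow> real mat \<Rightarrow> real mat \<Rightarrow> real mat" where
  "Gmat p P K H L = four_block_mat (1\<^sub>m p) (- (P * Kbar K H))
      L (Abar p - L * Cbar p - Bbar P * Kbar K H)"

definition Tmat :: "nat \<Rightarrow> real mat" where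
  "Tmat p = four_block_mat (1\<^sub>m p) (0\<^sub>m p (2*p)) (- transpose_mat (Cbar p)) (1\<^sub>m (2*p))"

end

theory Submission
  imports Defs
begin

(* The change of coordinates T = [[I, 0], [-Cbar^T, I]] is a shear, with
   inverse the shear by +Cbar^T, and conjugating a block matrix by it only involves products
   with Cbar^T.  The identities Cbar Cbar^T = I, Abar Cbar^T = Cbar^T, Kbar Cbar^T = K and
   Cbar^T P = Bbar make the lower-left block of T G T^-1 vanish and cancel the control term
   Bbar Kbar from the observer block.  Similar matrices have the same characteristic polynomial,
   that of a block upper-triangular matrix is the product of those of its diagonal blocks, and
   the complex eigenvalues are its roots. *)

definition shear_mat :: "nat \<Rightarrow> nat \<Rightarrow> 'a :: ring_1 mat \<Rightarrow> 'a mat" where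
  "shear_mat n1 n2 S = four_block_mat (1\<^sub>m n1) (0\<^sub>m n1 n2) S (1\<^sub>m n2)"

lemma shear_mat_carrier:
  "S \<in> carrier_mat n2 n1 \<Longrightarrow> shear_mat n1 n2 S \<in> carrier_mat (n1 + n2) (n1 + n2)"
  unfolding shear_mat_def by simp

lemma shear_mat_mult:
  assumes "S \<in> carrier_mat n2 n1" "S' \<in> carrier_mat n2 n1"
  shows "shear_mat n1 n2 S * shear_mat n1 n2 S' = shear_mat n1 n2 (S + S')"
  unfolding shear_mat_def
  by (subst mult_four_block_mat[of _ n1 n1 _ n2 _ n2 _ _ n1 _ n2]) (use assms in simp_all)

lemma shear_mat_uminus_inverse:
  assumes "S \<in> carrier_mat n2 n1"
  shows "shear_mat n1 n2 (- S) * shear_mat n1 n2 S = 1\<^sub>m (n1 + n2)"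
    and "shear_mat n1 n2 S * shear_mat n1 n2 (- S) = 1\<^sub>m (n1 + n2)"
proof -
  have "- S + S = 0\<^sub>m n2 n1" "S + - S = 0\<^sub>m n2 n1"
    using assms by (auto intro!: eq_matI)
  with assms show "shear_mat n1 n2 (- S) * shear_mat n1 n2 S = 1\<^sub>m (n1 + n2)"
    and "shear_mat n1 n2 S * shear_mat n1 n2 (- S) = 1\<^sub>m (n1 + n2)"
    by (simp_all add: shear_mat_mult) (simp_all add: shear_mat_def)
qed

lemma shear_mat_similarity:
  fixes A :: "'a :: ring_1 mat"
  assumes "A \<in> carrier_mat n1 n1" "B \<in> carrier_mat n1 n2"
    and "C \<in> carrier_mat n2 n1" "D \<in> carrier_mat n2 n2" "S \<in> carrier_mat n2 n1"
  shows "shear_mat n1 n2 (- S) * four_block_mat A B C D * shear_mat n1 n2 S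
    = four_block_mat (A + B * S) B (C - S * A + (D - S * B) * S) (D - S * B)"
proof -
  have "- (S * A) + C = C - S * A" "- (S * B) + D = D - S * B"
    using assms by (auto intro!: eq_matI)
  then have "shear_mat n1 n2 (- S) * four_block_mat A B C D
      = four_block_mat A B (C - S * A) (D - S * B)"
    unfolding shear_mat_def
    by (subst mult_four_block_mat[of _ n1 n1 _ n2 _ n2]) (use assms in simp_all)
  also have "\<dots> * shear_mat n1 n2 S
      = four_block_mat (A + B * S) B (C - S * A + (D - S * B) * S) (D - S * B)"
  proof -
    have "C - S * A \<in> carrier_mat n2 n1" "D - S * B \<in> carrier_mat n2 n2"
      using assms by auto
    with assms show ?thesis
      unfolding shear_mat_def
      by (subst mult_four_block_mat[of _ n1 n1 _ n2 _ n2 _ _ n1 _ n2]) simp_all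
  qed
  finally show ?thesis .
qed

lemma char_poly_four_block_mat_lower_left_zero:
  fixes A :: "'a :: idom mat"
  assumes A: "A \<in> carrier_mat n1 n1" and B: "B \<in> carrier_mat n1 n2" and D: "D \<in> carrier_mat n2 n2"
  shows "char_poly (four_block_mat A B (0\<^sub>m n2 n1) D) = char_poly A * char_poly D"
proof -
  have "char_poly_matrix (four_block_mat A B (0\<^sub>m n2 n1) D)
      = four_block_mat (char_poly_matrix A) (map_mat (\<lambda>a. [:- a:]) B) (0\<^sub>m n2 n1) (char_poly_matrix D)"
    using assms by (intro eq_matI) (auto simp: char_poly_matrix_def)
  then show ?thesis
    unfolding char_poly_def
    by (simp add: det_four_block_mat_lower_left_zero[of _ n1 _ n2] assms)
qed

lemma (in comm_ring_hom) char_poly_map_mat_mult: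
  assumes "G \<in> carrier_mat n n" "A \<in> carrier_mat n1 n1" "B \<in> carrier_mat n2 n2"
    and "char_poly G = char_poly A * char_poly B"
  shows "char_poly (map_mat hom G) = char_poly (map_mat hom A) * char_poly (map_mat hom B)"
proof -
  interpret map_poly_hom: map_poly_comm_ring_hom hom ..
  show ?thesis
    using assms by (simp add: char_poly_hom map_poly_hom.hom_mult)
qed

lemma eigenvalue_iff_char_poly_factor:
  fixes G :: "'a :: field mat"
  assumes "G \<in> carrier_mat n n" "A \<in> carrier_mat n1 n1" "B \<in> carrier_mat n2 n2"
    and "char_poly G = char_poly A * char_poly B"
  shows "eigenvalue G z \<longleftrightarrow> eigenvalue A z \<or> eigenvalue B z"
  using assms by (simp add: eigenvalue_root_char_poly)

lemma dim_Abar [simp]: "dim_row (Abar p) = 2*p" "dim_col (Abar p) = 2*p"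
  unfolding Abar_def by simp_all

lemma dim_Cbar [simp]: "dim_row (Cbar p) = p" "dim_col (Cbar p) = 2*p"
  unfolding Cbar_def by simp_all

lemma dim_Bbar: "dim_row (Bbar P) = 2 * dim_row P" "dim_col (Bbar P) = dim_col P"
  unfolding Bbar_def append_rows_def by simp_all

lemma dim_Kbar: "dim_row (Kbar K H) = dim_row K" "dim_col (Kbar K H) = dim_col K + dim_col H"
  unfolding Kbar_def by simp_all

lemma Abar_carrier [simp]: "Abar p \<in> carrier_mat (2*p) (2*p)"
  by (intro carrier_matI) simp_all

lemma Cbar_carrier [simp]: "Cbar p \<in> carrier_mat p (2*p)"
  by (intro carrier_matI) simp_all

lemma Bbar_carrier: "P \<in> carrier_mat p m \<Longrightarrow> Bbar P \<in> carrier_mat (2*p) m"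
  unfolding carrier_mat_def by (simp add: dim_Bbar)

lemma Kbar_carrier:
  "K \<in> carrier_mat m p \<Longrightarrow> H \<in> carrier_mat m p \<Longrightarrow> Kbar K H \<in> carrier_mat m (2*p)"
  unfolding carrier_mat_def by (simp add: dim_Kbar)

lemma index_Cbar [simp]: "i < p \<Longrightarrow> j < 2*p \<Longrightarrow> Cbar p $$ (i,j) = (if i = j then 1 else 0)"
  unfolding Cbar_def by simp

lemma index_Abar [simp]:
  "i < 2*p \<Longrightarrow> j < 2*p \<Longrightarrow> Abar p $$ (i,j) = (if i = j \<or> j = i + p then 1 else 0)"
  unfolding Abar_def by auto

lemma Cbar_mult_transpose_Cbar: "Cbar p * transpose_mat (Cbar p) = 1\<^sub>m p"
  by (rule eq_matI) (auto simp: scalar_prod_def if_distrib[of "\<lambda>x. x * _"] cong: if_cong)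

lemma Abar_mult_transpose_Cbar: "Abar p * transpose_mat (Cbar p) = transpose_mat (Cbar p)"
  by (rule eq_matI) (auto simp: scalar_prod_def if_distrib[of "\<lambda>x. _ * x"] cong: if_cong)

lemma Kbar_mult_transpose_Cbar:
  assumes "K \<in> carrier_mat m p"
  shows "Kbar K H * transpose_mat (Cbar p) = K"
proof (rule eq_matI)
  fix i j assume "i < dim_row K" "j < dim_col K"
  then show "(Kbar K H * transpose_mat (Cbar p)) $$ (i, j) = K $$ (i, j)"
    using assms by (auto simp: scalar_prod_def if_distrib[of "\<lambda>x. _ * x"] Kbar_def cong: if_cong)
qed (use assms in \<open>auto simp: dim_Kbar\<close>)

lemma transpose_Cbar_mult:
  assumes "P \<in> carrier_mat p m"
  shows "transpose_mat (Cbar p) * P = Bbar P"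
proof (rule eq_matI)
  fix i j assume "i < dim_row (Bbar P)" "j < dim_col (Bbar P)"
  then show "(transpose_mat (Cbar p) * P) $$ (i, j) = Bbar P $$ (i, j)"
    using assms by (auto simp: scalar_prod_def if_distrib[of "\<lambda>x. x * _"] Bbar_def append_rows_def cong: if_cong)
qed (use assms in \<open>auto simp: dim_Bbar\<close>)

lemma P_Kbar_mult_transpose_Cbar:
  assumes "P \<in> carrier_mat p m" "K \<in> carrier_mat m p" "H \<in> carrier_mat m p"
  shows "- (P * Kbar K H) * transpose_mat (Cbar p) = - (P * K)"
proof -
  have C: "transpose_mat (Cbar p) \<in> carrier_mat (2*p) p" by simp
  have Kb: "Kbar K H \<in> carrier_mat m (2*p)" using assms(2,3) by (rule Kbar_carrier)
  have "P * Kbar K H * transpose_mat (Cbar p) = P * K"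
    using assoc_mult_mat[OF assms(1) Kb C] Kbar_mult_transpose_Cbar[OF assms(2)] by simp
  with Kb show ?thesis by (simp add: carrier_matD)
qed

lemma transpose_Cbar_mult_P_Kbar:
  assumes "P \<in> carrier_mat p m" "K \<in> carrier_mat m p" "H \<in> carrier_mat m p"
  shows "transpose_mat (Cbar p) * - (P * Kbar K H) = - (Bbar P * Kbar K H)"
proof -
  have "transpose_mat (Cbar p) * (P * Kbar K H) = transpose_mat (Cbar p) * P * Kbar K H"
    using assms Kbar_carrier[OF assms(2,3)] by (intro assoc_mult_mat[symmetric]) auto
  with assms show ?thesis
    using Kbar_carrier[OF assms(2,3)] by (simp add: transpose_Cbar_mult)
qed

lemma observer_mult_transpose_Cbar:
  assumes "L \<in> carrier_mat (2*p) p"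
  shows "(Abar p - L * Cbar p) * transpose_mat (Cbar p) = transpose_mat (Cbar p) - L"
proof -
  have C: "transpose_mat (Cbar p) \<in> carrier_mat (2*p) p" by simp
  have "(Abar p - L * Cbar p) * transpose_mat (Cbar p)
      = Abar p * transpose_mat (Cbar p) - L * (Cbar p * transpose_mat (Cbar p))"
    using minus_mult_distrib_mat[OF Abar_carrier mult_carrier_mat[OF assms Cbar_carrier] C]
      assoc_mult_mat[OF assms Cbar_carrier C] by simp
  with assms show ?thesis
    by (simp add: Abar_mult_transpose_Cbar Cbar_mult_transpose_Cbar)
qed

lemma Tmat_eq_shear_mat: "Tmat p = shear_mat p (2*p) (- transpose_mat (Cbar p))"
  unfolding Tmat_def shear_mat_def ..

lemma Tmat_carrier: "Tmat p \<in> carrier_mat (3*p) (3*p)"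
  unfolding Tmat_eq_shear_mat using shear_mat_carrier[of "- transpose_mat (Cbar p)" "2*p" p]
  by (simp add: add_mult_distrib)

lemma shear_mat_transpose_Cbar_carrier:
  "shear_mat p (2*p) (transpose_mat (Cbar p)) \<in> carrier_mat (3*p) (3*p)"
  using shear_mat_carrier[of "transpose_mat (Cbar p)" "2*p" p] by (simp add: add_mult_distrib)

lemma Tmat_shear_mat_inverse:
  "Tmat p * shear_mat p (2*p) (transpose_mat (Cbar p)) = 1\<^sub>m (3*p)"
  "shear_mat p (2*p) (transpose_mat (Cbar p)) * Tmat p = 1\<^sub>m (3*p)"
  using shear_mat_uminus_inverse[of "transpose_mat (Cbar p)" "2*p" p]
  by (simp_all add: Tmat_eq_shear_mat add_mult_distrib)

lemma invertible_Tmat: "invertible_mat (Tmat p)"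
  unfolding invertible_mat_def inverts_mat_def
  using Tmat_shear_mat_inverse[of p] Tmat_carrier[of p] shear_mat_transpose_Cbar_carrier[of p]
  by auto

lemma Gmat_carrier:
  assumes P: "P \<in> carrier_mat p m" and K: "K \<in> carrier_mat m p" and H: "H \<in> carrier_mat m p"
    and L: "L \<in> carrier_mat (2*p) p"
  shows "Gmat p P K H L \<in> carrier_mat (3*p) (3*p)"
proof -
  have "Abar p - L * Cbar p - Bbar P * Kbar K H \<in> carrier_mat (2*p) (2*p)"
    using Bbar_carrier[OF P] Kbar_carrier[OF K H] by (intro minus_carrier_mat mult_carrier_mat)
  then have "Gmat p P K H L \<in> carrier_mat (p + 2*p) (p + 2*p)"
    unfolding Gmat_def using P L by (intro four_block_carrier_mat) simp_all
  then show ?thesis by (simp add: add_mult_distrib)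
qed

lemma Gmat_shear_similarity:
  assumes P: "P \<in> carrier_mat p m" and K: "K \<in> carrier_mat m p" and H: "H \<in> carrier_mat m p"
    and L: "L \<in> carrier_mat (2*p) p"
  shows "Tmat p * Gmat p P K H L * shear_mat p (2*p) (transpose_mat (Cbar p))
    = four_block_mat (1\<^sub>m p - P * K) (- (P * Kbar K H)) (0\<^sub>m (2*p) p) (Abar p - L * Cbar p)"
proof -
  let ?C = "transpose_mat (Cbar p)" and ?PKb = "- (P * Kbar K H)"
  let ?M = "Abar p - L * Cbar p - Bbar P * Kbar K H"
  have C: "?C \<in> carrier_mat (2*p) p" by simp
  have PKb: "?PKb \<in> carrier_mat p (2*p)" using P Kbar_carrier[OF K H] by simp
  have M: "?M \<in> carrier_mat (2*p) (2*p)"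
    using Bbar_carrier[OF P] Kbar_carrier[OF K H] by (intro minus_carrier_mat mult_carrier_mat)
  have "Tmat p * Gmat p P K H L * shear_mat p (2*p) ?C
    = four_block_mat (1\<^sub>m p + ?PKb * ?C) ?PKb (L - ?C * 1\<^sub>m p + (?M - ?C * ?PKb) * ?C) (?M - ?C * ?PKb)"
    unfolding Tmat_eq_shear_mat Gmat_def by (rule shear_mat_similarity[OF one_carrier_mat PKb L M C])
  also have "\<dots> = four_block_mat (1\<^sub>m p - P * K) ?PKb (0\<^sub>m (2*p) p) (Abar p - L * Cbar p)"
  proof (rule cong_four_block_mat)
    show "1\<^sub>m p + ?PKb * ?C = 1\<^sub>m p - P * K"
      using P K by (auto simp: P_Kbar_mult_transpose_Cbar[OF P K H] intro!: eq_matI)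
    show bottom_right: "?M - ?C * ?PKb = Abar p - L * Cbar p"
      using Bbar_carrier[OF P] Kbar_carrier[OF K H] L
      by (auto simp: transpose_Cbar_mult_P_Kbar[OF P K H] intro!: eq_matI)
    show "L - ?C * 1\<^sub>m p + (?M - ?C * ?PKb) * ?C = 0\<^sub>m (2*p) p"
      unfolding bottom_right observer_mult_transpose_Cbar[OF L] right_mult_one_mat[OF C]
      using L by (intro eq_matI) auto
  qed rule
  finally show ?thesis .
qed

lemma char_poly_Gmat:
  assumes P: "P \<in> carrier_mat p m" and K: "K \<in> carrier_mat m p" and H: "H \<in> carrier_mat m p"
    and L: "L \<in> carrier_mat (2*p) p"
  shows "char_poly (Gmat p P K H L) = char_poly (1\<^sub>m p - P * K) * char_poly (Abar p - L * Cbar p)"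
proof -
  let ?Ti = "shear_mat p (2*p) (transpose_mat (Cbar p))"
  let ?X = "four_block_mat (1\<^sub>m p - P * K) (- (P * Kbar K H)) (0\<^sub>m (2*p) p) (Abar p - L * Cbar p)"
  have "similar_mat ?X (Gmat p P K H L)"
  proof (rule similar_matI[of ?X "Gmat p P K H L" "Tmat p" ?Ti "3*p"])
    show "?X = Tmat p * Gmat p P K H L * ?Ti" by (rule Gmat_shear_similarity[OF P K H L, symmetric])
    then show "{?X, Gmat p P K H L, Tmat p, ?Ti} \<subseteq> carrier_mat (3*p) (3*p)"
      using mult_carrier_mat[OF mult_carrier_mat[OF Tmat_carrier Gmat_carrier[OF P K H L]]
          shear_mat_transpose_Cbar_carrier]
        Tmat_carrier Gmat_carrier[OF P K H L] shear_mat_transpose_Cbar_carrier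
      by simp
  qed (fact Tmat_shear_mat_inverse)+
  then have "char_poly (Gmat p P K H L) = char_poly ?X" by (simp add: char_poly_similar)
  also have "\<dots> = char_poly (1\<^sub>m p - P * K) * char_poly (Abar p - L * Cbar p)"
  proof (rule char_poly_four_block_mat_lower_left_zero)
    show "- (P * Kbar K H) \<in> carrier_mat p (2*p)" using P Kbar_carrier[OF K H] by simp
    show "Abar p - L * Cbar p \<in> carrier_mat (2*p) (2*p)"
      using mult_carrier_mat[OF L Cbar_carrier] by (rule minus_carrier_mat)
  qed (rule minus_carrier_mat[OF mult_carrier_mat[OF P K]])
  finally show ?thesis .
qed

lemma eigenvalue_Gmat_iff:
  assumes P: "P \<in> carrier_mat p m" and K: "K \<in> carrier_mat m p" and H: "H \<in> carrier_mat m p"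
    and L: "L \<in> carrier_mat (2*p) p"
  shows "eigenvalue (map_mat complex_of_real (Gmat p P K H L)) z
    \<longleftrightarrow> eigenvalue (map_mat complex_of_real (1\<^sub>m p - P * K)) z
      \<or> eigenvalue (map_mat complex_of_real (Abar p - L * Cbar p)) z"
proof (rule eigenvalue_iff_char_poly_factor)
  have "1\<^sub>m p - P * K \<in> carrier_mat p p" "Abar p - L * Cbar p \<in> carrier_mat (2*p) (2*p)"
    using P K L by auto
  with Gmat_carrier[OF P K H L] show "char_poly (map_mat complex_of_real (Gmat p P K H L))
      = char_poly (map_mat complex_of_real (1\<^sub>m p - P * K))
        * char_poly (map_mat complex_of_real (Abar p - L * Cbar p))"
    by (rule of_real_hom.char_poly_map_mat_mult[OF _ _ _ char_poly_Gmat[OF P K H L]])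
qed (use Gmat_carrier[OF P K H L] P K L in auto)

(* E_(k+1) = E_k + P Ub_k + D_k, with E, Ub and D unfolded. *)
lemma tracking_error_increment:
  fixes P :: "'a :: ring mat"
  assumes "P \<in> carrier_mat p m" "yd \<in> carrier_vec p" "u \<in> carrier_vec m" "u' \<in> carrier_vec m"
    and "n \<in> carrier_vec p" "n' \<in> carrier_vec p"
  shows "yd - (P *\<^sub>v u' + n') = (yd - (P *\<^sub>v u + n)) + P *\<^sub>v (- (u' - u)) + (- (n' - n))"
proof -
  have "- (u' - u) = u - u'"
    using assms by (intro eq_vecI) auto
  then have "P *\<^sub>v (- (u' - u)) = P *\<^sub>v u - P *\<^sub>v u'"
    using assms by (simp add: mult_minus_distrib_mat_vec)
  with assms show ?thesis
    by (intro eq_vecI) auto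
qed

lemma Gmat_mult_append_vec:
  assumes P: "P \<in> carrier_mat p m" and K: "K \<in> carrier_mat m p" and H: "H \<in> carrier_mat m p"
    and L: "L \<in> carrier_mat (2*p) p" and e: "e \<in> carrier_vec p" and x: "x \<in> carrier_vec (2*p)"
  defines "u \<equiv> - (Kbar K H *\<^sub>v x)"
  shows "Gmat p P K H L *\<^sub>v (e @\<^sub>v x)
    = (e + P *\<^sub>v u) @\<^sub>v ((Abar p - L * Cbar p) *\<^sub>v x + Bbar P *\<^sub>v u + L *\<^sub>v e)"
proof -
  define Kb where "Kb = Kbar K H"
  have Kb: "Kb \<in> carrier_mat m (2*p)" unfolding Kb_def using K H by (rule Kbar_carrier)
  have B: "Bbar P \<in> carrier_mat (2*p) m" using P by (rule Bbar_carrier)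
  have ALC: "Abar p - L * Cbar p \<in> carrier_mat (2*p) (2*p)"
    using mult_carrier_mat[OF L Cbar_carrier] by (rule minus_carrier_mat)
  have M: "Abar p - L * Cbar p - Bbar P * Kb \<in> carrier_mat (2*p) (2*p)"
    using B Kb by (intro minus_carrier_mat mult_carrier_mat)
  have PKb: "- (P * Kb) \<in> carrier_mat p (2*p)" using P Kb by simp
  have w: "Kb *\<^sub>v x \<in> carrier_vec m" using Kb x by simp
  have top: "1\<^sub>m p *\<^sub>v e + - (P * Kb) *\<^sub>v x = e + P *\<^sub>v u"
    using P Kb e x w unfolding u_def Kb_def[symmetric] by (intro eq_vecI) auto
  have "(Abar p - L * Cbar p - Bbar P * Kb) *\<^sub>v x = (Abar p - L * Cbar p) *\<^sub>v x - Bbar P *\<^sub>v (Kb *\<^sub>v x)"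
    using ALC B Kb x by (simp add: minus_mult_distrib_mat_vec)
  then have bottom: "L *\<^sub>v e + (Abar p - L * Cbar p - Bbar P * Kb) *\<^sub>v x
      = (Abar p - L * Cbar p) *\<^sub>v x + Bbar P *\<^sub>v u + L *\<^sub>v e"
    using L ALC B Kb e w x unfolding u_def Kb_def[symmetric] by (intro eq_vecI) auto
  show ?thesis
    unfolding Gmat_def Kb_def[symmetric] four_block_mat_mult_vec[OF one_carrier_mat PKb L M e x] top bottom ..
qed

lemma closed_loop_step:
  assumes P: "P \<in> carrier_mat p m" and K: "K \<in> carrier_mat m p" and H: "H \<in> carrier_mat m p"
    and L: "L \<in> carrier_mat (2*p) p"
    and e: "e \<in> carrier_vec p" and x: "x \<in> carrier_vec (2*p)" and d: "d \<in> carrier_vec p"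
  defines "u \<equiv> - (Kbar K H *\<^sub>v x)"
  shows "(e + P *\<^sub>v u + d) @\<^sub>v ((Abar p - L * Cbar p) *\<^sub>v x + Bbar P *\<^sub>v u + L *\<^sub>v e)
    = Gmat p P K H L *\<^sub>v (e @\<^sub>v x) + (1\<^sub>m p @\<^sub>r 0\<^sub>m (2*p) p) *\<^sub>v d"
proof -
  have u: "u \<in> carrier_vec m" unfolding u_def using Kbar_carrier[OF K H] x by simp
  have ALC: "Abar p - L * Cbar p \<in> carrier_mat (2*p) (2*p)"
    using mult_carrier_mat[OF L Cbar_carrier] by (rule minus_carrier_mat)
  have x': "(Abar p - L * Cbar p) *\<^sub>v x + Bbar P *\<^sub>v u + L *\<^sub>v e \<in> carrier_vec (2*p)"
    using ALC Bbar_carrier[OF P] L x u e by simp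
  have "0\<^sub>m (2*p) p *\<^sub>v d = 0\<^sub>v (2*p)"
    using d by (intro eq_vecI) auto
  then have "Gmat p P K H L *\<^sub>v (e @\<^sub>v x) + (1\<^sub>m p @\<^sub>r 0\<^sub>m (2*p) p) *\<^sub>v d
    = ((e + P *\<^sub>v u) @\<^sub>v ((Abar p - L * Cbar p) *\<^sub>v x + Bbar P *\<^sub>v u + L *\<^sub>v e)) + (d @\<^sub>v 0\<^sub>v (2*p))"
    unfolding Gmat_mult_append_vec[OF P K H L e x, folded u_def]
      mat_mult_append[OF one_carrier_mat zero_carrier_mat d]
    using d by simp
  also have "\<dots> = (e + P *\<^sub>v u + d) @\<^sub>v ((Abar p - L * Cbar p) *\<^sub>v x + Bbar P *\<^sub>v u + L *\<^sub>v e)"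
    using P e u d x' by (subst append_vec_add[of _ p _ _ "2*p"]) simp_all
  finally show ?thesis ..
qed

theorem lemma4:
  fixes p m :: nat
    and P K H L :: "real mat"
    and Yd :: "real vec"
    and U Y N E Ub D :: "nat \<Rightarrow> real vec"
    and Xh :: "nat \<Rightarrow> real vec"
  assumes P: "P \<in> carrier_mat p m"
    and K: "K \<in> carrier_mat m p" and H: "H \<in> carrier_mat m p"
    and L: "L \<in> carrier_mat (2*p) p"
    and Yd: "Yd \<in> carrier_vec p"
    and U: "\<And>k. U k \<in> carrier_vec m"
    and N: "\<And>k. N k \<in> carrier_vec p"
    and Xh: "\<And>k. Xh k \<in> carrier_vec (2*p)"
    and plant: "\<And>k. Y k = P *\<^sub>v U k + N k"
    and err: "\<And>k. E k = Yd - Y k"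
    and Ubar: "\<And>k. Ub k = - (U (Suc k) - U k)"
    and Dist: "\<And>k. D k = - (N (Suc k) - N k)"
    and eso: "\<And>k. Xh (Suc k) = (Abar p - L * Cbar p) *\<^sub>v Xh k + Bbar P *\<^sub>v Ub k + L *\<^sub>v E k"
    and ctrl: "\<And>k. Ub k = - (Kbar K H *\<^sub>v Xh k)"
  shows "(\<forall>k. E (Suc k) @\<^sub>v Xh (Suc k)
             = Gmat p P K H L *\<^sub>v (E k @\<^sub>v Xh k)
               + (1\<^sub>m p @\<^sub>r 0\<^sub>m (2*p) p) *\<^sub>v D k)
       \<and> invertible_mat (Tmat p)
       \<and> (\<exists>Ti. Tmat p * Ti = 1\<^sub>m (3*p) \<and> Ti * Tmat p = 1\<^sub>m (3*p)
              \<and> Tmat p * Gmat p P K H L * Ti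
                  = four_block_mat (1\<^sub>m p - P * K) (- (P * Kbar K H))
                      (0\<^sub>m (2*p) p) (Abar p - L * Cbar p))
       \<and> char_poly (Gmat p P K H L)
           = char_poly (1\<^sub>m p - P * K) * char_poly (Abar p - L * Cbar p)
       \<and> (\<forall>z::complex. eigenvalue (map_mat complex_of_real (Gmat p P K H L)) z
             \<longleftrightarrow> eigenvalue (map_mat complex_of_real (1\<^sub>m p - P * K)) z
                 \<or> eigenvalue (map_mat complex_of_real (Abar p - L * Cbar p)) z)"
proof -
  have E_carrier: "E k \<in> carrier_vec p" for k
    unfolding err plant using P Yd U N by simp
  have dynamics: "E (Suc k) @\<^sub>v Xh (Suc k)
      = Gmat p P K H L *\<^sub>v (E k @\<^sub>v Xh k) + (1\<^sub>m p @\<^sub>r 0\<^sub>m (2*p) p) *\<^sub>v D k" for k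
  proof -
    have "E (Suc k) = E k + P *\<^sub>v Ub k + D k"
      unfolding err plant Ubar Dist by (rule tracking_error_increment[OF P Yd U U N N])
    moreover have "D k \<in> carrier_vec p" unfolding Dist using N by simp
    ultimately show ?thesis
      unfolding eso ctrl using closed_loop_step[OF P K H L E_carrier Xh] by simp
  qed
  show ?thesis
    using dynamics invertible_Tmat Tmat_shear_mat_inverse Gmat_shear_similarity[OF P K H L]
      char_poly_Gmat[OF P K H L] eigenvalue_Gmat_iff[OF P K H L]
    by blast
qed

end
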